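(* Let $n$ be odd, $p\ge1$, $q=2^{p+1}$, and let $f:\mathbb{Z}_2^n\to\mathbb{Z}_q$ satisfy $f(x)\equiv 2^p a(x)+\sum_{j=0}^{p-1}2^ja_j(x)\pmod q$ for Boolean functions $a,a_0,\dots,a_{p-1}$ on $\mathbb{Z}_2^n$. For $i\in\{0,\dots,2^p-1\}$ let $g_i=a\oplus z_{i,0}a_0\oplus\cdots\oplus z_{i,p-1}a_{p-1}$ and for $u\in\mathbb{Z}_2^n$ let $W(u)=(W_{g_0}(u),\dots,W_{g_{2^p-1}}(u))$. Suppose every $g_i$ is semi-bent and that for every $u\in\mathbb{Z}_2^n$ there exist $r\in\{0,\dots,2^{p-1}-1\}$ and $\epsilon\in\{\pm1\}$ such that either $W(u)=(\epsilon\sqrt2\,H^{(r)}_{2^{p-1}},\mathbf{0}_{2^{p-1}})$ or $W(u)=(\mathbf{0}_{2^{p-1}},\epsilon\sqrt2\,H^{(r)}_{2^{p-1}})$ (concatenations of vectors of length $2^{p-1}$, $\mathbf{0}_{2^{p-1}}$ the all-zero vector). Then $f$ is generalized bent.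
   Context: For $i\in\{0,\dots,2^m-1\}$, $z_i=(z_{i,0},\dots,z_{i,m-1})\in\mathbb{Z}_2^m$ is the binary vector with $i=\sum_j z_{i,j}2^j$. $H_{2^m}$ is the Sylvester–Hadamard matrix with entries $(H_{2^m})_{k,i}=(-1)^{z_k\cdot z_i}$, and $H^{(r)}_{2^m}$ its $r$-th row. $W_g(u)=2^{-n/2}\sum_{x\in\mathbb{Z}_2^n}(-1)^{g(x)\oplus u\cdot x}$; for odd $n$, $g$ is semi-bent if $W_g(u)\in\{0,\pm\sqrt2\}$ for all $u$. With $\zeta=e^{2\pi\mathrm{i}/q}$, $\mathcal{H}_f(u)=2^{-n/2}\sum_{x}\zeta^{f(x)}(-1)^{u\cdot x}$, and $f$ is generalized bent if $|\mathcal{H}_f(u)|=1$ for all $u$. *)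

theory Defs
  imports "HOL-Analysis.Analysis"
begin

text \<open>Vectors of Z_2^n are represented as functions nat => bool vanishing outside {0..<n}.\<close>
definition cube :: "nat \<Rightarrow> (nat \<Rightarrow> bool) set" where
  "cube n = {x. \<forall>j. n \<le> j \<longrightarrow> \<not> x j}"

definition dotp :: "nat \<Rightarrow> (nat \<Rightarrow> bool) \<Rightarrow> (nat \<Rightarrow> bool) \<Rightarrow> bool" where
  "dotp n u x = odd (card {j. j < n \<and> u j \<and> x j})"

definition b2i :: "bool \<Rightarrow> nat" where
  "b2i b = (if b then 1 else 0)"

definition walsh :: "nat \<Rightarrow> ((nat \<Rightarrow> bool) \<Rightarrow> bool) \<Rightarrow> (nat \<Rightarrow> bool) \<Rightarrow> real" where
  "walsh n g u = (1 / sqrt (2 ^ n)) *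
     (\<Sum>x\<in>cube n. (-1::real) ^ (b2i (g x \<noteq> dotp n u x)))"

definition semi_bent :: "nat \<Rightarrow> ((nat \<Rightarrow> bool) \<Rightarrow> bool) \<Rightarrow> bool" where
  "semi_bent n g \<longleftrightarrow> (\<forall>u\<in>cube n. walsh n g u \<in> {0, sqrt 2, - sqrt 2})"

definition gen_walsh :: "nat \<Rightarrow> nat \<Rightarrow> ((nat \<Rightarrow> bool) \<Rightarrow> int) \<Rightarrow> (nat \<Rightarrow> bool) \<Rightarrow> complex" where
  "gen_walsh q n f u = (1 / complex_of_real (sqrt (2 ^ n))) *
     (\<Sum>x\<in>cube n. cis (2 * pi * real_of_int (f x) / real q) * (-1) ^ (b2i (dotp n u x)))"

definition gen_bent :: "nat \<Rightarrow> nat \<Rightarrow> ((nat \<Rightarrow> bool) \<Rightarrow> int) \<Rightarrow> bool" where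
  "gen_bent q n f \<longleftrightarrow> (\<forall>u\<in>cube n. cmod (gen_walsh q n f u) = 1)"

text \<open>z_{i,j}: the j-th binary digit of i.\<close>
definition zbit :: "nat \<Rightarrow> nat \<Rightarrow> bool" where
  "zbit i j = odd (i div 2 ^ j)"

text \<open>Entry (k,i) of the Sylvester-Hadamard matrix H_{2^m}: (-1)^(z_k . z_i).\<close>
definition hadamard :: "nat \<Rightarrow> nat \<Rightarrow> nat \<Rightarrow> real" where
  "hadamard m k i = (-1) ^ card {j. j < m \<and> zbit k j \<and> zbit i j}"

end

theory Submission
  imports Defs
begin

text \<open>
  Let w_j = zeta^(2^j) (zeta_pow2). Since zeta^(2^p) = -1, the decomposition of f gives
  zeta^f(x) = (-1)^a(x) * prod_j w_j^a_j(x), and expanding every factor as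
  w^b = ((1 + w) + (1 - w) (-1)^b) / 2 turns this into 2^-p * sum_i alpha_i (-1)^g_i(x) with
  alpha_i = prod_{j<p} (1 + w_j (-1)^z_{i,j}) (digit_weight). Hence 2^p H_f(u) = sum_i alpha_i W_{g_i}(u).
  Because w_{p-1} = i, the weights of the two halves of the index range are (1 + i) beta_i and
  (1 - i) beta_i, and paired with a Hadamard row the beta_i sum to 2^(p-1) times a unimodular
  product. So exactly one half contributes, with modulus |1 +- i| * sqrt 2 * 2^(p-1) = 2^p.
\<close>

definition bool_sign :: "bool \<Rightarrow> 'a::comm_ring_1" where
  "bool_sign b = (if b then -1 else 1)"

definition zeta_pow2 :: "nat \<Rightarrow> nat \<Rightarrow> complex" where
  "zeta_pow2 q j = cis (2 * pi * 2 ^ j / q)"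

definition digit_weight :: "nat \<Rightarrow> nat \<Rightarrow> nat \<Rightarrow> complex" where
  "digit_weight q m i = (\<Prod>j<m. 1 + zeta_pow2 q j * bool_sign (zbit i j))"

lemma sum_lessThan_add:
  "(\<Sum>i<m + (k::nat). F i) = (\<Sum>i<m. F i) + (\<Sum>i<k. (F (m + i) :: 'a::comm_monoid_add))"
  by (induction k) (simp_all add: ac_simps)

lemma zbit_less_pow: "i < 2 ^ m \<Longrightarrow> \<not> zbit i m"
  by (simp add: zbit_def)

lemma zbit_pow_add_self: "i < 2 ^ m \<Longrightarrow> zbit (2 ^ m + i) m"
  by (simp add: zbit_def)

lemma zbit_pow_add_less:
  assumes "j < m"
  shows "zbit (2 ^ m + i) j = zbit i j"
proof -
  have "(2::nat) ^ m = 2 ^ j * (2 * 2 ^ (m - j - 1))"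
    using assms by (simp flip: power_add power_Suc)
  then have "(2 ^ m + i) div 2 ^ j = 2 * 2 ^ (m - j - 1) + i div 2 ^ j"
    by simp
  then show ?thesis by (simp add: zbit_def)
qed

lemma sum_prod_zbit:
  fixes h :: "nat \<Rightarrow> bool \<Rightarrow> 'a::comm_semiring_1"
  shows "(\<Sum>i<2 ^ m. \<Prod>j<m. h j (zbit i j)) = (\<Prod>j<m. h j False + h j True)"
proof (induction m)
  case 0
  then show ?case by simp
next
  case (Suc m)
  let ?P = "\<lambda>i. \<Prod>j<m. h j (zbit i j)"
  have low: "(\<Prod>j<Suc m. h j (zbit i j)) = h m False * ?P i" if "i < 2 ^ m" for i
    using zbit_less_pow[OF that] by (simp add: mult.commute)
  have high: "(\<Prod>j<Suc m. h j (zbit (2 ^ m + i) j)) = h m True * ?P i" if "i < 2 ^ m" for i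
    using zbit_pow_add_self[OF that] zbit_pow_add_less[of _ m i] by (simp add: mult.commute)
  have "(\<Sum>i<2 ^ Suc m. \<Prod>j<Suc m. h j (zbit i j))
      = (\<Sum>i<2 ^ m. \<Prod>j<Suc m. h j (zbit i j)) + (\<Sum>i<2 ^ m. \<Prod>j<Suc m. h j (zbit (2 ^ m + i) j))"
    using sum_lessThan_add[of _ "2 ^ m" "2 ^ m"] by (simp add: mult_2)
  also have "\<dots> = (h m False + h m True) * (\<Sum>i<2 ^ m. ?P i)"
    by (simp add: low high sum_distrib_left distrib_right sum.distrib del: prod.lessThan_Suc)
  finally show ?case
    by (simp add: Suc.IH mult.commute)
qed

lemma power_card_eq_prod_bool_sign:
  "(-1::'a::comm_ring_1) ^ card {j. j < (m::nat) \<and> P j} = (\<Prod>j<m. bool_sign (P j))"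
proof (induction m)
  case 0
  then show ?case by simp
next
  case (Suc m)
  have "{j. j < Suc m \<and> P j} = (if P m then insert m {j. j < m \<and> P j} else {j. j < m \<and> P j})"
    by (auto simp: less_Suc_eq)
  then show ?case
    using Suc by (simp add: bool_sign_def mult.commute)
qed

lemma sum_weights_times_signs:
  fixes w :: "nat \<Rightarrow> 'a::comm_ring_1"
  shows "(\<Sum>i<2 ^ m. (\<Prod>j<m. 1 + w j * bool_sign (zbit i j)) * (\<Prod>j<m. bool_sign (zbit i j \<and> B j)))
       = 2 ^ m * (\<Prod>j<m. if B j then w j else 1)"
proof -
  have "(\<Sum>i<2 ^ m. (\<Prod>j<m. 1 + w j * bool_sign (zbit i j)) * (\<Prod>j<m. bool_sign (zbit i j \<and> B j)))
      = (\<Sum>i<2 ^ m. \<Prod>j<m. (1 + w j * bool_sign (zbit i j)) * bool_sign (zbit i j \<and> B j))"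
    by (simp add: prod.distrib)
  also have "\<dots> = (\<Prod>j<m. (1 + w j * bool_sign False) * bool_sign (False \<and> B j)
                            + (1 + w j * bool_sign True) * bool_sign (True \<and> B j))"
    by (rule sum_prod_zbit)
  also have "\<dots> = (\<Prod>j<m. 2 * (if B j then w j else 1))"
    by (rule prod.cong) (auto simp: bool_sign_def algebra_simps)
  finally show ?thesis
    by (simp add: prod.distrib)
qed

lemma sign_prod_expansion:
  fixes w :: "nat \<Rightarrow> 'a::comm_ring_1"
  shows "2 ^ m * (bool_sign A * (\<Prod>j<m. if B j then w j else 1))
       = (\<Sum>i<2 ^ m. (\<Prod>j<m. 1 + w j * bool_sign (zbit i j))
                      * bool_sign (A \<noteq> odd (card {j. j < m \<and> zbit i j \<and> B j})))"
proof -
  have xor: "bool_sign (A \<noteq> odd k) = bool_sign A * (-1) ^ k" for k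
    by (auto simp: bool_sign_def)
  have "(\<Sum>i<2 ^ m. (\<Prod>j<m. 1 + w j * bool_sign (zbit i j))
                   * bool_sign (A \<noteq> odd (card {j. j < m \<and> zbit i j \<and> B j})))
      = bool_sign A * (\<Sum>i<2 ^ m. (\<Prod>j<m. 1 + w j * bool_sign (zbit i j))
                                  * (\<Prod>j<m. bool_sign (zbit i j \<and> B j)))"
    unfolding xor power_card_eq_prod_bool_sign[where P = "\<lambda>j. zbit _ j \<and> B j", simplified]
    by (simp add: sum_distrib_left ac_simps)
  also have "\<dots> = bool_sign A * (2 ^ m * (\<Prod>j<m. if B j then w j else 1))"
    by (simp only: sum_weights_times_signs)
  finally show ?thesis
    by (simp only: mult.left_commute)
qed

lemma cis_sum: "cis (\<Sum>j<(m::nat). F j) = (\<Prod>j<m. cis (F j))"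
  by (induction m) (simp_all add: cis_mult[symmetric])

lemma cis_binary_expansion:
  fixes y :: int
  assumes "y mod 2 ^ (p + 1) = (2 ^ p * int (b2i A) + (\<Sum>j<p. 2 ^ j * int (b2i (B j)))) mod 2 ^ (p + 1)"
  shows "cis (2 * pi * real_of_int y / real (2 ^ (p + 1)))
       = bool_sign A * (\<Prod>j<p. if B j then zeta_pow2 (2 ^ (p + 1)) j else 1)"
proof -
  define R where "R = 2 ^ p * int (b2i A) + (\<Sum>j<p. 2 ^ j * int (b2i (B j)))"
  obtain t where t: "y = R + 2 ^ (p + 1) * t"
    using assms unfolding R_def by (metis mod_eqE add.commute)
  have "2 * pi * real_of_int y / real (2 ^ (p + 1)) = 2 * pi * real_of_int R / 2 ^ (p + 1) + 2 * pi * real_of_int t"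
    unfolding t by (simp add: field_simps)
  then have "cis (2 * pi * real_of_int y / real (2 ^ (p + 1))) = cis (2 * pi * real_of_int R / 2 ^ (p + 1))"
    by (simp add: cis_mult[symmetric])
  also have "2 * pi * real_of_int R / 2 ^ (p + 1)
      = pi * real (b2i A) + (\<Sum>j<p. if B j then 2 * pi * 2 ^ j / 2 ^ (p + 1) else 0)"
    unfolding R_def
    by (simp add: b2i_def sum_divide_distrib sum_distrib_left field_simps power_add if_distrib
        cong: if_cong)
  finally show ?thesis
    by (simp add: cis_mult[symmetric] cis_sum b2i_def bool_sign_def zeta_pow2_def if_distrib
        cong: if_cong)
qed

lemma gen_walsh_as_walsh_combination:
  fixes \<alpha> :: "nat \<Rightarrow> complex"
  assumes "\<And>x. x \<in> cube n \<Longrightarrow> c * cis (2 * pi * real_of_int (f x) / real q)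
                                   = (\<Sum>i<N. \<alpha> i * bool_sign (g i x))"
  shows "c * gen_walsh q n f u = (\<Sum>i<N. \<alpha> i * walsh n (g i) u)"
proof -
  have sign: "bool_sign G * (-1) ^ b2i D = complex_of_real ((-1) ^ b2i (G \<noteq> D))" for G D
    by (auto simp: bool_sign_def b2i_def)
  have "c * gen_walsh q n f u = (1 / sqrt (2 ^ n)) *
      (\<Sum>x\<in>cube n. c * cis (2 * pi * real_of_int (f x) / real q) * (-1) ^ b2i (dotp n u x))"
    unfolding gen_walsh_def by (simp add: sum_distrib_left ac_simps)
  also have "\<dots> = (1 / sqrt (2 ^ n)) *
      (\<Sum>x\<in>cube n. (\<Sum>i<N. \<alpha> i * bool_sign (g i x)) * (-1) ^ b2i (dotp n u x))"
    using assms by (simp cong: sum.cong)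
  also have "\<dots> = (\<Sum>i<N. \<alpha> i * ((1 / complex_of_real (sqrt (2 ^ n))) *
      (\<Sum>x\<in>cube n. bool_sign (g i x) * (-1) ^ b2i (dotp n u x))))"
    by (simp add: sum_distrib_left sum_distrib_right sum.swap[of _ "cube n"] ac_simps)
  finally show ?thesis
    unfolding walsh_def sign by simp
qed

lemma gen_walsh_eq_digit_weighted_walsh:
  assumes f_decomp: "\<forall>x\<in>cube n. f x mod 2 ^ (p + 1) = (2 ^ p * int (b2i (a x))
                       + (\<Sum>j<p. 2 ^ j * int (b2i (as j x)))) mod 2 ^ (p + 1)"
    and g_def: "\<forall>i<2 ^ p. \<forall>x\<in>cube n.
                  g i x = (a x \<noteq> odd (card {j. j < p \<and> zbit i j \<and> as j x}))"
  shows "2 ^ p * gen_walsh (2 ^ (p + 1)) n f u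
       = (\<Sum>i<2 ^ p. digit_weight (2 ^ (p + 1)) p i * walsh n (g i) u)"
proof (rule gen_walsh_as_walsh_combination)
  fix x assume x: "x \<in> cube n"
  have "2 ^ p * cis (2 * pi * real_of_int (f x) / real (2 ^ (p + 1)))
      = 2 ^ p * (bool_sign (a x) * (\<Prod>j<p. if as j x then zeta_pow2 (2 ^ (p + 1)) j else 1))"
    using cis_binary_expansion f_decomp x by simp
  also have "\<dots> = (\<Sum>i<2 ^ p. digit_weight (2 ^ (p + 1)) p i
                     * bool_sign (a x \<noteq> odd (card {j. j < p \<and> zbit i j \<and> as j x})))"
    unfolding digit_weight_def by (rule sign_prod_expansion)
  also have "\<dots> = (\<Sum>i<2 ^ p. digit_weight (2 ^ (p + 1)) p i * bool_sign (g i x))"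
    using g_def x by simp
  finally show "2 ^ p * cis (2 * pi * real_of_int (f x) / real (2 ^ (p + 1)))
      = (\<Sum>i<2 ^ p. digit_weight (2 ^ (p + 1)) p i * bool_sign (g i x))" .
qed

lemma zeta_pow2_top: "zeta_pow2 (2 ^ (m + 2)) m = \<i>"
proof -
  have "2 * pi * 2 ^ m / real (2 ^ (m + 2)) = pi / 2"
    by (simp add: field_simps power_add)
  then show ?thesis
    by (simp add: zeta_pow2_def)
qed

lemma digit_weight_low_half:
  assumes "i < 2 ^ m"
  shows "digit_weight (2 ^ (m + 2)) (Suc m) i = (1 + \<i>) * digit_weight (2 ^ (m + 2)) m i"
  using zbit_less_pow[OF assms]
  unfolding digit_weight_def prod.lessThan_Suc zeta_pow2_top by (simp add: bool_sign_def mult.commute)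

lemma digit_weight_high_half:
  assumes "i < 2 ^ m"
  shows "digit_weight (2 ^ (m + 2)) (Suc m) (2 ^ m + i) = (1 - \<i>) * digit_weight (2 ^ (m + 2)) m i"
  using zbit_pow_add_self[OF assms] zbit_pow_add_less[of _ m i]
  unfolding digit_weight_def prod.lessThan_Suc zeta_pow2_top by (simp add: bool_sign_def mult.commute)

lemma norm_sum_digit_weight_hadamard:
  "cmod (\<Sum>i<2 ^ m. digit_weight q m i * hadamard m r i) = 2 ^ m"
proof -
  have "complex_of_real (hadamard m r i) = (\<Prod>j<m. bool_sign (zbit i j \<and> zbit r j))" for i
    unfolding hadamard_def
    using power_card_eq_prod_bool_sign[where 'a = complex, of m "\<lambda>j. zbit i j \<and> zbit r j"]
    by (simp add: conj_commute)
  then have "(\<Sum>i<2 ^ m. digit_weight q m i * hadamard m r i)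
      = (\<Sum>i<2 ^ m. (\<Prod>j<m. 1 + zeta_pow2 q j * bool_sign (zbit i j))
                     * (\<Prod>j<m. bool_sign (zbit i j \<and> zbit r j)))"
    by (simp add: digit_weight_def)
  also have "\<dots> = 2 ^ m * (\<Prod>j<m. if zbit r j then zeta_pow2 q j else 1)"
    by (rule sum_weights_times_signs)
  moreover have "cmod (\<Prod>j<m. if zbit r j then zeta_pow2 q j else 1) = 1"
    unfolding prod_norm[symmetric] by (rule prod.neutral) (simp add: zeta_pow2_def)
  ultimately show ?thesis
    by (simp add: norm_mult norm_power)
qed

lemma norm_digit_weighted_sum_of_spectrum:
  fixes W :: "nat \<Rightarrow> real"
  assumes eps: "\<epsilon> \<in> {1, -1}"
    and W: "(\<forall>i<2 ^ m. W i = \<epsilon> * sqrt 2 * hadamard m r i \<and> W (2 ^ m + i) = 0)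
          \<or> (\<forall>i<2 ^ m. W i = 0 \<and> W (2 ^ m + i) = \<epsilon> * sqrt 2 * hadamard m r i)"
  shows "cmod (\<Sum>i<2 ^ Suc m. digit_weight (2 ^ (m + 2)) (Suc m) i * W i) = 2 ^ Suc m"
proof -
  define q :: nat where "q = 2 ^ (m + 2)"
  define S where "S k = (\<Sum>i<2 ^ m. digit_weight q m i * W (k + i))" for k
  have "(\<Sum>i<2 ^ Suc m. digit_weight q (Suc m) i * W i)
      = (\<Sum>i<2 ^ m. digit_weight q (Suc m) i * W i)
        + (\<Sum>i<2 ^ m. digit_weight q (Suc m) (2 ^ m + i) * W (2 ^ m + i))"
    using sum_lessThan_add[of _ "2 ^ m" "2 ^ m"] by (simp add: mult_2)
  also have "\<dots> = (1 + \<i>) * S 0 + (1 - \<i>) * S (2 ^ m)"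
  proof -
    have "digit_weight q (Suc m) i = (1 + \<i>) * digit_weight q m i"
      and "digit_weight q (Suc m) (2 ^ m + i) = (1 - \<i>) * digit_weight q m i"
      if "i < 2 ^ m" for i
      unfolding q_def using that by (rule digit_weight_low_half, rule digit_weight_high_half)
    then show ?thesis
      unfolding S_def sum_distrib_left
      by (intro arg_cong2[where f = "(+)"] sum.cong) (simp_all add: mult.assoc)
  qed
  finally have split: "(\<Sum>i<2 ^ Suc m. digit_weight q (Suc m) i * W i)
      = (1 + \<i>) * S 0 + (1 - \<i>) * S (2 ^ m)" .
  define R where "R = (\<Sum>i<2 ^ m. digit_weight q m i * (\<epsilon> * sqrt 2 * hadamard m r i))"
  have norm_R: "cmod R = sqrt 2 * 2 ^ m"
  proof -
    have "R = (\<epsilon> * sqrt 2) * (\<Sum>i<2 ^ m. digit_weight q m i * hadamard m r i)"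
      unfolding R_def by (simp add: sum_distrib_left ac_simps)
    then show ?thesis
      using eps by (auto simp: norm_mult norm_sum_digit_weight_hadamard)
  qed
  from W consider "S 0 = R" "S (2 ^ m) = 0" | "S 0 = 0" "S (2 ^ m) = R"
  proof (elim disjE)
    assume "\<forall>i<2 ^ m. W i = \<epsilon> * sqrt 2 * hadamard m r i \<and> W (2 ^ m + i) = 0"
    then have "S 0 = R" "S (2 ^ m) = 0"
      unfolding S_def R_def by (auto intro!: sum.cong sum.neutral)
    then show thesis by (rule that(1))
  next
    assume "\<forall>i<2 ^ m. W i = 0 \<and> W (2 ^ m + i) = \<epsilon> * sqrt 2 * hadamard m r i"
    then have "S 0 = 0" "S (2 ^ m) = R"
      unfolding S_def R_def by (auto intro!: sum.cong sum.neutral)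
    then show thesis by (rule that(2))
  qed
  moreover have "cmod (1 + \<i>) = sqrt 2" "cmod (1 - \<i>) = sqrt 2"
    by (simp_all add: cmod_def)
  ultimately have "cmod ((1 + \<i>) * S 0 + (1 - \<i>) * S (2 ^ m)) = sqrt 2 * cmod R"
    by cases (simp_all add: norm_mult)
  then show ?thesis
    using split norm_R by (simp add: q_def)
qed

theorem theorem4:
  fixes n p :: nat
    and f :: "(nat \<Rightarrow> bool) \<Rightarrow> int"
    and a :: "(nat \<Rightarrow> bool) \<Rightarrow> bool"
    and as :: "nat \<Rightarrow> (nat \<Rightarrow> bool) \<Rightarrow> bool"
    and g :: "nat \<Rightarrow> (nat \<Rightarrow> bool) \<Rightarrow> bool"
  assumes n_odd: "odd n"
    and p_pos: "1 \<le> p"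
    and f_decomp: "\<forall>x\<in>cube n. f x mod 2 ^ (p + 1) = (2 ^ p * int (b2i (a x))
                       + (\<Sum>j<p. 2 ^ j * int (b2i (as j x)))) mod 2 ^ (p + 1)"
    and g_def: "\<forall>i<2 ^ p. \<forall>x\<in>cube n.
                  g i x = (a x \<noteq> odd (card {j. j < p \<and> zbit i j \<and> as j x}))"
    and semibent: "\<forall>i<2 ^ p. semi_bent n (g i)"
    and spectrum: "\<forall>u\<in>cube n. \<exists>r<2 ^ (p - 1). \<exists>\<epsilon>::real. \<epsilon> \<in> {1, -1} \<and>
        ((\<forall>i<2 ^ (p - 1). walsh n (g i) u = \<epsilon> * sqrt 2 * hadamard (p - 1) r i
                          \<and> walsh n (g (2 ^ (p - 1) + i)) u = 0)
       \<or> (\<forall>i<2 ^ (p - 1). walsh n (g i) u = 0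
                          \<and> walsh n (g (2 ^ (p - 1) + i)) u = \<epsilon> * sqrt 2 * hadamard (p - 1) r i))"
  shows "gen_bent (2 ^ (p + 1)) n f"
  unfolding gen_bent_def
proof
  fix u assume u: "u \<in> cube n"
  obtain m where p: "p = Suc m"
    using p_pos by (cases p) auto
  obtain r \<epsilon> where "\<epsilon> \<in> {1, -1}"
    and "(\<forall>i<2 ^ m. walsh n (g i) u = \<epsilon> * sqrt 2 * hadamard m r i \<and> walsh n (g (2 ^ m + i)) u = 0)
       \<or> (\<forall>i<2 ^ m. walsh n (g i) u = 0 \<and> walsh n (g (2 ^ m + i)) u = \<epsilon> * sqrt 2 * hadamard m r i)"
    using spectrum u unfolding p diff_Suc_1 by blast
  then have "cmod (\<Sum>i<2 ^ p. digit_weight (2 ^ (p + 1)) p i * walsh n (g i) u) = 2 ^ p"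
    using norm_digit_weighted_sum_of_spectrum[of \<epsilon> m "\<lambda>i. walsh n (g i) u" r]
    unfolding p by simp
  then have "cmod (2 ^ p * gen_walsh (2 ^ (p + 1)) n f u) = 2 ^ p"
    by (simp only: gen_walsh_eq_digit_weighted_walsh[OF f_decomp g_def])
  then show "cmod (gen_walsh (2 ^ (p + 1)) n f u) = 1"
    by (simp add: norm_mult norm_power)
qed

end
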